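(* Let $r=r(n)\ge 4$ be an integer-valued function with $r=o(n^{1/8})$ and let $n$ be sufficiently large. Let $A$ be an independent set in $G(n,r,1)$, and let $A_0$, $I_0$, $A_1$, $P$ and the notion "connected" be as defined in the context. Then no element $x\in[n]\setminus(I_0\cup P)$ is connected to two different vertices of $A_0$.
   Context: $G(n,r,1)$ is the graph on $[n]^{(r)}$ in which two $r$-subsets are adjacent iff they intersect in exactly one element; thus any two distinct members of an independent set $A$ are disjoint or share at least two elements. Let $A_0=\{v_1,\dots,v_k\}\subset A$ be a subfamily of pairwise disjoint sets of maximum possible cardinality, and $I_0=v_1\cup\dots\cup v_k$. Let $A_1$ be the set of $v\in A\setminus A_0$ that intersect exactly one of $v_1,\dots,v_k$. Let $\omega=\omega(r,n)=1$ if $r=4$ and $\omega=r^5\binom{n}{r-5}$ if $r\ge5$. An element $x\in[n]\setminus I_0$ is connected to $v_i$ if at least $\omega$ members of $A_1$ contain $x$ and intersect $v_i$. Two distinct elements $x,y$ are joint if every $v\in A_1$ satisfies $|v\cap\{x,y\}|\ne 1$. $P$ is the set of elements of $[n]\setminus I_0$ that are joint with some other element of $[n]\setminus I_0$. *)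

theory Defs
  imports Complex_Main "HOL-Library.Landau_Symbols"
begin

text \<open>Vertices of G(n,r,1): the r-subsets of [n] = {1..n}.\<close>
definition rsets :: "nat \<Rightarrow> nat \<Rightarrow> nat set set" where
  "rsets n r = {v. v \<subseteq> {1..n} \<and> card v = r}"

definition indep_Gnr1 :: "nat \<Rightarrow> nat \<Rightarrow> nat set set \<Rightarrow> bool" where
  "indep_Gnr1 n r A \<longleftrightarrow> A \<subseteq> rsets n r \<and>
     (\<forall>u\<in>A. \<forall>v\<in>A. u \<noteq> v \<longrightarrow> card (u \<inter> v) \<noteq> 1)"

definition pairwise_disjoint_fam :: "nat set set \<Rightarrow> bool" where
  "pairwise_disjoint_fam B \<longleftrightarrow> (\<forall>u\<in>B. \<forall>v\<in>B. u \<noteq> v \<longrightarrow> u \<inter> v = {})"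

definition max_disjoint_subfam :: "nat set set \<Rightarrow> nat set set \<Rightarrow> bool" where
  "max_disjoint_subfam A A0 \<longleftrightarrow> A0 \<subseteq> A \<and> pairwise_disjoint_fam A0 \<and>
     (\<forall>B. B \<subseteq> A \<and> pairwise_disjoint_fam B \<longrightarrow> card B \<le> card A0)"

definition A1_of :: "nat set set \<Rightarrow> nat set set \<Rightarrow> nat set set" where
  "A1_of A A0 = {v \<in> A - A0. card {u \<in> A0. u \<inter> v \<noteq> {}} = 1}"

definition omega :: "nat \<Rightarrow> nat \<Rightarrow> nat" where
  "omega r n = (if r = 4 then 1 else r ^ 5 * (n choose (r - 5)))"

definition connected_to :: "nat \<Rightarrow> nat \<Rightarrow> nat set set \<Rightarrow> nat set set \<Rightarrow> nat \<Rightarrow> nat set \<Rightarrow> bool" where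
  "connected_to n r A A0 x vi \<longleftrightarrow>
     x \<in> {1..n} - \<Union>A0 \<and>
     card {v \<in> A1_of A A0. x \<in> v \<and> v \<inter> vi \<noteq> {}} \<ge> omega r n"

definition joint :: "nat set set \<Rightarrow> nat set set \<Rightarrow> nat \<Rightarrow> nat \<Rightarrow> bool" where
  "joint A A0 x y \<longleftrightarrow> x \<noteq> y \<and> (\<forall>v \<in> A1_of A A0. card (v \<inter> {x, y}) \<noteq> 1)"

definition P_of :: "nat \<Rightarrow> nat set set \<Rightarrow> nat set set \<Rightarrow> nat set" where
  "P_of n A A0 = {x \<in> {1..n} - \<Union>A0. \<exists>y \<in> {1..n} - \<Union>A0. joint A A0 x y}"

end

theory Submission
  imports Defs
begin

text \<open>Suppose x, outside I0 and P, were connected to two distinct u, w in A0, and let T(u), T(w)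
be the members of A1 through x meeting u, resp. w. Any t in T(u) and t' in T(w) share x, hence a
second point y outside I0. Since x and y are not joint, some s in A1 meets exactly one of them, and
s avoids u or w, say u. A member of T(u) through y then meets s off {x, y} and u in two points, so
it contains five prescribed points; there are at most r^3 (n choose r-5) of them (none if r = 4). Double counting
the pairs (t, t') through their common points gives |T(u)| |T(w)| \<le> r^4 (n choose r-5)
(|T(u)| + |T(w)|), which is incompatible with |T(u)|, |T(w)| \<ge> \<omega>. This holds for every n.\<close>

lemma finite_rsets: "finite (rsets n r)"
  by (rule finite_subset[of _ "Pow {1..n}"]) (auto simp: rsets_def)

lemma rsets_memD:
  assumes "t \<in> rsets n r"
  shows "finite t" "card t = r" "t \<subseteq> {1..n}"
  using assms finite_subset[of t "{1..n}"] by (auto simp: rsets_def)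

lemma card_rsets_supersets_le:
  assumes "finite K"
  shows "card {t \<in> rsets n r. K \<subseteq> t} \<le> (if card K \<le> r then n choose (r - card K) else 0)"
proof (cases "card K \<le> r")
  case False
  have "\<not> K \<subseteq> t" if "t \<in> rsets n r" for t
    using False card_mono[OF rsets_memD(1)[OF that]] rsets_memD(2)[OF that] by auto
  then have "card {t \<in> rsets n r. K \<subseteq> t} = 0"
    by (metis (no_types, lifting) card.empty empty_Collect_eq)
  with False show ?thesis
    by simp
next
  case True
  let ?S = "{t \<in> rsets n r. K \<subseteq> t}"
  have "inj_on (\<lambda>t. t - K) ?S"
    by (rule inj_onI) (metis (no_types, lifting) Diff_partition mem_Collect_eq)
  moreover have "card (t - K) = r - card K" "t - K \<subseteq> {1..n}" if "t \<in> ?S" for t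
    using that assms rsets_memD[of t n r] by (auto simp: card_Diff_subset)
  then have "(\<lambda>t. t - K) ` ?S \<subseteq> {B. B \<subseteq> {1..n} \<and> card B = r - card K}"
    by blast
  ultimately have "card ?S \<le> card {B. B \<subseteq> {1..n} \<and> card B = r - card K}"
    by (intro card_inj_on_le) auto
  with True show ?thesis
    by (simp add: n_subsets)
qed

lemma indep_Gnr1_card_Int_ge_2:
  assumes "indep_Gnr1 n r A" "s \<in> A" "t \<in> A" "s \<noteq> t" "s \<inter> t \<noteq> {}"
  shows "2 \<le> card (s \<inter> t)"
proof -
  have "finite (s \<inter> t)"
    using assms(1,2) rsets_memD(1) by (auto simp: indep_Gnr1_def)
  then have "card (s \<inter> t) \<noteq> 0"
    using assms(5) by simp
  moreover have "card (s \<inter> t) \<noteq> 1"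
    using assms(1-4) by (auto simp: indep_Gnr1_def)
  ultimately show ?thesis
    by linarith
qed

lemma card_ge_2_ex_neq:
  assumes "2 \<le> card S"
  shows "\<exists>y\<in>S. y \<noteq> x"
proof (rule ccontr)
  assume "\<not> (\<exists>y\<in>S. y \<noteq> x)"
  then have "card S \<le> card {x}"
    by (intro card_mono) auto
  with assms show False
    by simp
qed

lemma A1_of_meets_unique:
  assumes "v \<in> A1_of A A0" "u \<in> A0" "w \<in> A0" "v \<inter> u \<noteq> {}" "v \<inter> w \<noteq> {}"
  shows "u = w"
proof -
  have "card {z \<in> A0. z \<inter> v \<noteq> {}} = 1"
    using assms(1) by (simp add: A1_of_def)
  then obtain z where z: "{z \<in> A0. z \<inter> v \<noteq> {}} = {z}"
    by (auto simp: card_1_singleton_iff)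
  have "u \<in> {z \<in> A0. z \<inter> v \<noteq> {}}" "w \<in> {z \<in> A0. z \<inter> v \<noteq> {}}"
    using assms(2-5) by auto
  then show ?thesis
    using z by auto
qed

lemma card_supersets_through_pair_le:
  assumes ind: "indep_Gnr1 n r A" and uA: "u \<in> A" and sA: "s \<in> A"
    and xy: "x \<noteq> y" and xu: "x \<notin> u" and yu: "y \<notin> u"
    and s_xy: "card (s \<inter> {x, y}) = 1" and su: "s \<inter> u = {}"
  shows "card {t \<in> A. {x, y} \<subseteq> t \<and> t \<inter> u \<noteq> {}}
           \<le> r ^ 3 * (if 5 \<le> r then n choose (r - 5) else 0)"
proof -
  define M where "M = (if 5 \<le> r then n choose (r - 5) else 0)"
  define I where "I = (s - {x, y}) \<times> {(a, b). a \<in> u \<and> b \<in> u \<and> a \<noteq> b}"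
  define F where "F = (\<lambda>(c, a, b). {t \<in> rsets n r. {x, y, c, a, b} \<subseteq> t})"
  have Ars: "A \<subseteq> rsets n r"
    using ind by (simp add: indep_Gnr1_def)
  have fin_s: "finite s" "card s = r" and fin_u: "finite u" "card u = r"
    using Ars sA uA rsets_memD(1,2) by blast+
  have cover: "{t \<in> A. {x, y} \<subseteq> t \<and> t \<inter> u \<noteq> {}} \<subseteq> (\<Union>i\<in>I. F i)"
  proof
    fix t assume "t \<in> {t \<in> A. {x, y} \<subseteq> t \<and> t \<inter> u \<noteq> {}}"
    then have t: "t \<in> A" "{x, y} \<subseteq> t" "t \<inter> u \<noteq> {}"
      by blast+
    have "s \<noteq> t"
      using s_xy t(2) xy by (auto simp: Int_absorb1)
    moreover have "s \<inter> {x, y} \<noteq> {}"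
      using s_xy by (metis card.empty zero_neq_one)
    then have "s \<inter> t \<noteq> {}"
      using t(2) by blast
    ultimately have "2 \<le> card (s \<inter> t)"
      using indep_Gnr1_card_Int_ge_2[OF ind sA t(1)] by simp
    then have "\<not> s \<inter> t \<subseteq> s \<inter> {x, y}"
      using s_xy card_mono[of "s \<inter> {x, y}" "s \<inter> t"] by auto
    then obtain c where c: "c \<in> s" "c \<in> t" "c \<notin> {x, y}"
      by blast
    have "u \<noteq> t"
      using t(2) xu by blast
    then have "2 \<le> card (u \<inter> t)"
      using indep_Gnr1_card_Int_ge_2[OF ind uA t(1)] t(3) by (simp add: Int_commute)
    moreover obtain a where "a \<in> u \<inter> t"
      using t(3) by blast
    ultimately obtain b where ab: "a \<in> u \<inter> t" "b \<in> u \<inter> t" "b \<noteq> a"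
      using card_ge_2_ex_neq[of "u \<inter> t" a] by blast
    have "t \<in> F (c, a, b)" "(c, a, b) \<in> I"
      using Ars t c ab by (auto simp: F_def I_def)
    then show "t \<in> (\<Union>i\<in>I. F i)"
      by blast
  qed
  have F_bound: "card (F i) \<le> M" if "i \<in> I" for i
  proof -
    obtain c a b where i: "i = (c, a, b)" "c \<in> s - {x, y}" "a \<in> u" "b \<in> u" "a \<noteq> b"
      using \<open>i \<in> I\<close> by (auto simp: I_def)
    have "c \<notin> u"
      using i(2) su by blast
    then have "x \<noteq> c" "x \<noteq> a" "x \<noteq> b" "y \<noteq> c" "y \<noteq> a" "y \<noteq> b" "c \<noteq> a" "c \<noteq> b"
      using i xu yu by auto
    then have "card {x, y, c, a, b} = 5"
      using i(5) xy by simp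
    then show ?thesis
      using card_rsets_supersets_le[of "{x, y, c, a, b}" n r]
      unfolding i(1) F_def M_def by (simp only: prod.case finite.insertI finite.emptyI)
  qed
  have "card I \<le> r * (r * r)"
  proof -
    have "card (s - {x, y}) \<le> r"
      using fin_s card_mono[of s "s - {x, y}"] by simp
    moreover have "card {(a, b). a \<in> u \<and> b \<in> u \<and> a \<noteq> b} \<le> r * r"
      using card_mono[of "u \<times> u" "{(a, b). a \<in> u \<and> b \<in> u \<and> a \<noteq> b}"] fin_u
      by (auto simp: card_cartesian_product)
    ultimately show ?thesis
      by (simp add: I_def card_cartesian_product mult_le_mono)
  qed
  have "finite I"
    using fin_s fin_u by (auto simp: I_def intro: finite_subset[of _ "u \<times> u"])
  have "card {t \<in> A. {x, y} \<subseteq> t \<and> t \<inter> u \<noteq> {}} \<le> card (\<Union>i\<in>I. F i)"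
  proof (rule card_mono[OF _ cover])
    show "finite (\<Union>i\<in>I. F i)"
      by (rule finite_subset[OF _ finite_rsets[of n r]]) (auto simp: F_def)
  qed
  also have "\<dots> \<le> (\<Sum>i\<in>I. card (F i))"
    by (rule card_UN_le[OF \<open>finite I\<close>])
  also have "\<dots> \<le> card I * M"
    using F_bound sum_bounded_above[of I "\<lambda>i. card (F i)" M] by simp
  also have "\<dots> \<le> r ^ 3 * M"
    using \<open>card I \<le> r * (r * r)\<close> by (simp add: power3_eq_cube mult_le_mono1)
  finally show ?thesis
    unfolding M_def .
qed

lemma sum_card_incident_le:
  assumes "finite T" "finite Y" "\<And>v. v \<in> T \<Longrightarrow> finite v \<and> card v \<le> r"
  shows "(\<Sum>y\<in>Y. card {v \<in> T. y \<in> v}) \<le> r * card T"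
proof -
  have "(\<Sum>y\<in>Y. card {v \<in> T. y \<in> v}) = (\<Sum>y\<in>Y. \<Sum>v\<in>{v \<in> T. y \<in> v}. 1::nat)"
    by simp
  also have "\<dots> = (\<Sum>v\<in>T. \<Sum>y\<in>{y \<in> Y. y \<in> v}. 1::nat)"
    by (rule sum.swap_restrict[OF assms(2,1)])
  also have "\<dots> = (\<Sum>v\<in>T. card {y \<in> Y. y \<in> v})"
    by simp
  also have "\<dots> \<le> (\<Sum>v\<in>T. r)"
  proof (rule sum_mono)
    fix v assume "v \<in> T"
    then have "card {y \<in> Y. y \<in> v} \<le> card v" "card v \<le> r"
      using assms(3) card_mono[of v "{y \<in> Y. y \<in> v}"] by auto
    then show "card {y \<in> Y. y \<in> v} \<le> r"
      by linarith
  qed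
  finally show ?thesis
    by (simp add: mult.commute)
qed

lemma mult_le_mult_add_if_le:
  fixes a b B :: nat
  assumes "a \<le> B \<or> b \<le> B"
  shows "a * b \<le> B * (a + b)"
proof (cases "a \<le> B")
  case True
  then have "a * b \<le> B * b"
    by (rule mult_le_mono1)
  then have "a * b \<le> B * a + B * b"
    by linarith
  then show ?thesis
    by (simp only: add_mult_distrib2)
next
  case False
  then have "a * b \<le> a * B"
    using assms by (intro mult_le_mono2) simp
  then have "a * b \<le> B * a"
    by (simp only: mult.commute[of a B])
  then have "a * b \<le> B * a + B * b"
    by linarith
  then show ?thesis
    by (simp only: add_mult_distrib2)
qed

lemma card_times_le_via_common_points:
  assumes fin: "finite T1" "finite T2" "finite Y"
    and small: "\<And>v. v \<in> T1 \<union> T2 \<Longrightarrow> finite v \<and> card v \<le> r"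
    and common: "\<And>t t'. t \<in> T1 \<Longrightarrow> t' \<in> T2 \<Longrightarrow> \<exists>y\<in>Y. y \<in> t \<and> y \<in> t'"
    and sparse: "\<And>y. y \<in> Y \<Longrightarrow> card {t \<in> T1. y \<in> t} \<le> B \<or> card {t \<in> T2. y \<in> t} \<le> B"
  shows "card T1 * card T2 \<le> B * r * (card T1 + card T2)"
proof -
  let ?T1 = "\<lambda>y. {t \<in> T1. y \<in> t}" and ?T2 = "\<lambda>y. {t \<in> T2. y \<in> t}"
  have "T1 \<times> T2 \<subseteq> (\<Union>y\<in>Y. ?T1 y \<times> ?T2 y)"
    using common by blast
  then have "card (T1 \<times> T2) \<le> card (\<Union>y\<in>Y. ?T1 y \<times> ?T2 y)"
    using fin by (intro card_mono) auto
  then have "card T1 * card T2 \<le> card (\<Union>y\<in>Y. ?T1 y \<times> ?T2 y)"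
    by (simp only: card_cartesian_product)
  also have "\<dots> \<le> (\<Sum>y\<in>Y. card (?T1 y) * card (?T2 y))"
    using card_UN_le[OF fin(3), of "\<lambda>y. ?T1 y \<times> ?T2 y"] by (simp add: card_cartesian_product)
  also have "\<dots> \<le> (\<Sum>y\<in>Y. B * (card (?T1 y) + card (?T2 y)))"
  proof (rule sum_mono)
    fix y assume "y \<in> Y"
    from sparse[OF this] show "card (?T1 y) * card (?T2 y) \<le> B * (card (?T1 y) + card (?T2 y))"
      by (rule mult_le_mult_add_if_le)
  qed
  also have "\<dots> = B * ((\<Sum>y\<in>Y. card (?T1 y)) + (\<Sum>y\<in>Y. card (?T2 y)))"
    by (simp only: sum_distrib_left[symmetric] sum.distrib)
  also have "\<dots> \<le> B * (r * card T1 + r * card T2)"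
    using sum_card_incident_le[of T1 Y r] sum_card_incident_le[of T2 Y r] fin small
    by (intro mult_le_mono2 add_mono) auto
  finally show ?thesis
    by (simp add: algebra_simps)
qed

lemma mult_add_less_mult:
  fixes c p q :: nat
  assumes "2 * c < p" "2 * c < q"
  shows "c * (p + q) < p * q"
proof -
  have "2 * c * q < p * q" "2 * c * p < q * p"
    using assms by (intro mult_less_mono1; linarith)+
  then show ?thesis
    by (simp only: add_mult_distrib2 mult.commute[of q p] mult.assoc)
qed

lemma twice_r4_bound_less_omega:
  assumes "4 \<le> r" "r \<le> n"
  shows "2 * (r ^ 3 * (if 5 \<le> r then n choose (r - 5) else 0) * r) < omega r n"
proof (cases "r = 4")
  case False
  then have "5 \<le> r" "0 < n choose (r - 5)"
    using assms by simp_all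
  have "2 * r ^ 4 < r * r ^ 4"
    using \<open>5 \<le> r\<close> by simp
  then have "2 * (r ^ 3 * r) < r ^ 5"
    by (simp add: power_Suc2[symmetric] power_Suc[symmetric])
  then have "2 * (r ^ 3 * r) * (n choose (r - 5)) < r ^ 5 * (n choose (r - 5))"
    using \<open>0 < n choose (r - 5)\<close> by (rule mult_less_mono1)
  with \<open>5 \<le> r\<close> False show ?thesis
    by (simp add: omega_def mult_ac)
qed (simp add: omega_def)

lemma not_connected_to_two:
  assumes r: "4 \<le> r" and ind: "indep_Gnr1 n r A" and A0A: "A0 \<subseteq> A"
    and x: "x \<in> {1..n} - \<Union>A0" "x \<notin> P_of n A A0"
    and uw: "u \<in> A0" "w \<in> A0" "u \<noteq> w"
    and conn: "connected_to n r A A0 x u" "connected_to n r A A0 x w"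
  shows False
proof -
  define M where "M = (if 5 \<le> r then n choose (r - 5) else 0)"
  define T where "T z = {v \<in> A1_of A A0. x \<in> v \<and> v \<inter> z \<noteq> {}}" for z
  define Y where "Y = {1..n} - \<Union>A0 - {x}"
  have Ars: "A \<subseteq> rsets n r"
    using ind by (simp add: indep_Gnr1_def)
  have T_rsets: "T z \<subseteq> rsets n r" for z
    using Ars by (auto simp: T_def A1_of_def)
  have common: "\<exists>y\<in>Y. y \<in> t \<and> y \<in> t'" if "t \<in> T u" "t' \<in> T w" for t t'
  proof -
    have t: "t \<in> A1_of A A0" "x \<in> t" "t \<inter> u \<noteq> {}"
      and t': "t' \<in> A1_of A A0" "x \<in> t'" "t' \<inter> w \<noteq> {}"
      using that by (auto simp: T_def)
    have "t \<noteq> t'"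
      using A1_of_meets_unique[OF t'(1) uw(1,2)] t(3) t'(3) uw(3) by auto
    then have "2 \<le> card (t \<inter> t')"
      using indep_Gnr1_card_Int_ge_2[OF ind] t t' by (auto simp: A1_of_def)
    then obtain y where y: "y \<in> t \<inter> t'" "y \<noteq> x"
      using card_ge_2_ex_neq[of "t \<inter> t'" x] by blast
    have "y \<notin> \<Union>A0"
    proof
      assume "y \<in> \<Union>A0"
      then obtain v where "v \<in> A0" "y \<in> v"
        by blast
      then have "v = u" "v = w"
        using A1_of_meets_unique[OF t(1) _ uw(1)] A1_of_meets_unique[OF t'(1) _ uw(2)] t(3) t'(3) y(1)
        by blast+
      with uw(3) show False
        by simp
    qed
    moreover have "y \<in> {1..n}"
      using T_rsets that(1) y(1) rsets_memD(3) by blast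
    ultimately show ?thesis
      using y by (auto simp: Y_def)
  qed
  have sparse: "card {t \<in> T u. y \<in> t} \<le> r ^ 3 * M \<or> card {t \<in> T w. y \<in> t} \<le> r ^ 3 * M"
    if "y \<in> Y" for y
  proof -
    have y: "y \<in> {1..n} - \<Union>A0" "x \<noteq> y"
      using that by (auto simp: Y_def)
    then obtain s where s: "s \<in> A1_of A A0" "card (s \<inter> {x, y}) = 1"
      using x by (auto simp: P_of_def joint_def)
    have bound: "card {t \<in> T z. y \<in> t} \<le> r ^ 3 * M" if z: "z \<in> A0" "s \<inter> z = {}" for z
    proof -
      have "z \<in> A" "s \<in> A" "x \<notin> z" "y \<notin> z"
        using z(1) s(1) A0A x(1) y(1) by (auto simp: A1_of_def)
      have "finite {t \<in> A. {x, y} \<subseteq> t \<and> t \<inter> z \<noteq> {}}"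
        by (rule finite_subset[OF _ finite_rsets[of n r]]) (use Ars in blast)
      moreover have "{t \<in> T z. y \<in> t} \<subseteq> {t \<in> A. {x, y} \<subseteq> t \<and> t \<inter> z \<noteq> {}}"
        by (auto simp: T_def A1_of_def)
      ultimately have "card {t \<in> T z. y \<in> t} \<le> card {t \<in> A. {x, y} \<subseteq> t \<and> t \<inter> z \<noteq> {}}"
        by (rule card_mono)
      also have "\<dots> \<le> r ^ 3 * M"
        unfolding M_def
        by (rule card_supersets_through_pair_le) (use ind \<open>z \<in> A\<close> \<open>s \<in> A\<close> \<open>x \<notin> z\<close> \<open>y \<notin> z\<close> y(2) s(2) z(2) in auto)
      finally show ?thesis .
    qed
    have "s \<inter> u = {} \<or> s \<inter> w = {}"
      using A1_of_meets_unique[OF s(1) uw(1,2)] uw(3) by blast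
    then show ?thesis
      using bound uw(1,2) by blast
  qed
  have product_le: "card (T u) * card (T w) \<le> r ^ 3 * M * r * (card (T u) + card (T w))"
  proof (rule card_times_le_via_common_points[OF _ _ _ _ common sparse])
    show "finite (T u)" "finite (T w)"
      using finite_subset[OF T_rsets finite_rsets] by blast+
    show "finite Y"
      by (simp add: Y_def)
    show "finite v \<and> card v \<le> r" if "v \<in> T u \<union> T w" for v
      using that T_rsets rsets_memD(1,2) by blast
  qed
  have "r \<le> n"
  proof -
    have "u \<in> rsets n r"
      using uw(1) A0A Ars by blast
    then show ?thesis
      using card_mono[of "{1..n}" u] rsets_memD(2,3) by fastforce
  qed
  then have "2 * (r ^ 3 * M * r) < omega r n"
    unfolding M_def by (rule twice_r4_bound_less_omega[OF r])
  moreover have "omega r n \<le> card (T u)" "omega r n \<le> card (T w)"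
    using conn by (simp_all add: connected_to_def T_def)
  ultimately have "r ^ 3 * M * r * (card (T u) + card (T w)) < card (T u) * card (T w)"
    by (intro mult_add_less_mult) linarith+
  with product_le show False
    by linarith
qed

theorem lemma2:
  fixes r :: "nat \<Rightarrow> nat"
  assumes "\<And>n. r n \<ge> 4"
    and "(\<lambda>n. real (r n)) \<in> o(\<lambda>n. real n powr (1/8))"
  shows "\<exists>N. \<forall>n\<ge>N. \<forall>A A0. indep_Gnr1 n (r n) A \<and> max_disjoint_subfam A A0 \<longrightarrow>
           (\<forall>x \<in> {1..n} - (\<Union>A0 \<union> P_of n A A0).
              \<not> (\<exists>u\<in>A0. \<exists>w\<in>A0. u \<noteq> w \<and>
                    connected_to n (r n) A A0 x u \<and> connected_to n (r n) A A0 x w))"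
proof (intro exI allI impI ballI notI)
  fix n A A0 x
  assume "indep_Gnr1 n (r n) A \<and> max_disjoint_subfam A A0"
    and "x \<in> {1..n} - (\<Union>A0 \<union> P_of n A A0)"
    and "\<exists>u\<in>A0. \<exists>w\<in>A0. u \<noteq> w \<and> connected_to n (r n) A A0 x u \<and> connected_to n (r n) A A0 x w"
  then show False
    using not_connected_to_two[where r = "r n" and n = n and A = A and A0 = A0 and x = x, OF assms(1)]
    by (auto simp: max_disjoint_subfam_def)
qed

end
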